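(* Let $\beta>1$ be a root of an irreducible monic polynomial $p\in\mathbb Z[x]$ of degree $d>1$, with Galois conjugates $\beta_2,\dots,\beta_d$. Let $E=[0,B)$ and let $F:E\to E$ be a generalized $\beta$-transformation, i.e. there are $0=x_0<x_1<\dots<x_l=B$ and $y_1,\dots,y_l$ with $\beta I_j-y_j\subseteq E$ and $F(x)=\beta x-y_j$ for $x\in I_j=[x_{j-1},x_j)$, and assume $x_0,\dots,x_l,y_1,\dots,y_l\in\mathbb{Q}(\beta)$. Then: (1) If $|\beta_j|<1$ for all $j=2,\dots,d$, then for every $x\in\mathbb{Q}(\beta)\cap E$ the orbit $\{F^n(x):n\ge0\}$ is finite, hence eventually periodic. (2) If $|\beta_j|>1$ for some $j\in\{2,\dots,d\}$, then there exists $x\in\mathbb{Q}(\beta)\cap E$ whose orbit under $F$ is infinite. *)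

theory Defs
  imports Complex_Main "HOL-Computational_Algebra.Polynomial"
begin

definition Qfield :: "real \<Rightarrow> real set" where
  "Qfield b = {poly (map_poly of_rat q) b | q. True}"

definition gen_beta_transf ::
  "real \<Rightarrow> real \<Rightarrow> nat \<Rightarrow> (nat \<Rightarrow> real) \<Rightarrow> (nat \<Rightarrow> real) \<Rightarrow> (real \<Rightarrow> real) \<Rightarrow> bool" where
  "gen_beta_transf \<beta> B l xs ys F \<longleftrightarrow>
     l \<ge> 1 \<and> xs 0 = 0 \<and> xs l = B \<and> (\<forall>j<l. xs j < xs (Suc j)) \<and>
     (\<forall>j\<in>{1..l}. \<forall>t. xs (j - 1) \<le> t \<and> t < xs j \<longrightarrow>
        0 \<le> \<beta> * t - ys j \<and> \<beta> * t - ys j < B \<and> F t = \<beta> * t - ys j)"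

end

theory Submission
  imports Defs "Berlekamp_Zassenhaus.Factor_Bound"
begin

text \<open>
  For a root z of p, let \<sigma>_z be the embedding of Q(\<beta>) into the complex numbers
  sending \<beta> to z. A step of F reads \<sigma>_z(F t) = z \<sigma>_z(t) - \<sigma>_z(y_j),
  so along an orbit \<sigma>_z is an affine recursion with multiplier z and bounded perturbation.

  If all conjugates other than \<beta> lie in the unit disc, every \<sigma>_z is bounded on the orbit
  (for z = \<beta> because the orbit stays in [0,B)). The orbit also has a common denominator D,
  so its points are c(\<beta>)/D for integer polynomials c of degree < deg p whose values at
  all deg p distinct roots of p are bounded; interpolation bounds the coefficients of c, and
  only finitely many such c exist.

  If some conjugate z \<noteq> \<beta> satisfies |z| > 1, pick x = b\<beta> - r in [0,B) with b a large
  integer and r rational, so that |\<sigma>_z(x) - x| = b|z - \<beta>| is large. Once |\<sigma>_z(x)|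
  exceeds M/(|z| - 1), where M = \<Sum>_j |\<sigma>_z(y_j)|, the values |\<sigma>_z(F^n x)| increase
  strictly, so the orbit is infinite.
\<close>

text \<open>Induction on the points: dividing c by X - z, the quotient is bounded by 2M/\<delta> at the
  remaining points, where \<delta> bounds their distance to z from below.\<close>
lemma bounded_coeffs_if_bounded_at:
  fixes zs :: "'a::real_normed_field list"
  assumes "distinct zs"
  shows "\<exists>K. \<forall>c. degree c < length zs \<longrightarrow> (\<forall>z\<in>set zs. norm (poly c z) \<le> M) \<longrightarrow>
           (\<forall>i. norm (poly.coeff c i) \<le> K)"
  using assms
proof (induction zs arbitrary: M)
  case Nil
  then show ?case by simp
next
  case (Cons z zs)
  define \<delta> where "\<delta> = Min (insert 1 ((\<lambda>w. norm (w - z)) ` set zs))"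
  have \<delta>_pos: "\<delta> > 0"
    using Cons.prems by (auto simp: \<delta>_def)
  have \<delta>_le: "\<delta> \<le> norm (w - z)" if "w \<in> set zs" for w
    using that by (simp add: \<delta>_def)
  obtain K where K: "\<And>s i. degree s < length zs \<Longrightarrow>
      \<forall>w\<in>set zs. norm (poly s w) \<le> 2 * M / \<delta> \<Longrightarrow> norm (poly.coeff s i) \<le> K"
    using Cons by fastforce
  show ?case
  proof (intro exI[of _ "M + (1 + norm z) * max K 0"] allI impI)
    fix c :: "'a poly" and i
    assume deg: "degree c < length (z # zs)"
      and bounded: "\<forall>w\<in>set (z # zs). norm (poly c w) \<le> M"
    have bounded_z: "norm (poly c z) \<le> M"
      using bounded by simp
    then have M_nonneg: "0 \<le> M"
      by (rule order_trans[OF norm_ge_zero])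
    define s where "s = synthetic_div c z"
    have s_at: "(w - z) * poly s w = poly c w - poly c z" for w
      using arg_cong[OF synthetic_div_correct'[of z c], of "\<lambda>q. poly q w"]
      by (simp add: s_def algebra_simps)
    have s_bounded: "norm (poly.coeff s j) \<le> max K 0" for j
    proof (cases "degree c = 0")
      case True
      then show ?thesis by (simp add: s_def synthetic_div_eq_0_iff[THEN iffD2])
    next
      case False
      have "norm (poly s w) \<le> 2 * M / \<delta>" if w: "w \<in> set zs" for w
      proof -
        have "w \<noteq> z" using Cons.prems w by auto
        moreover have "norm (poly c w - poly c z) = norm (w - z) * norm (poly s w)"
          by (simp flip: s_at add: norm_mult)
        ultimately have "norm (poly s w) = norm (poly c w - poly c z) / norm (w - z)"
          by simp
        also have "\<dots> \<le> 2 * M / norm (w - z)"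
          using bounded w norm_triangle_ineq4[of "poly c w" "poly c z"]
          by (intro divide_right_mono) auto
        also have "\<dots> \<le> 2 * M / \<delta>"
          using M_nonneg \<delta>_pos \<delta>_le[OF w] by (intro divide_left_mono mult_pos_pos) auto
        finally show ?thesis .
      qed
      moreover have "degree s < length zs"
        using deg False by (simp add: s_def degree_synthetic_div)
      ultimately have "norm (poly.coeff s j) \<le> K"
        using K by blast
      then show ?thesis by simp
    qed
    have "poly.coeff c i = poly.coeff (pCons (poly c z) s) i - z * poly.coeff s i"
      using arg_cong[OF synthetic_div_correct[of c z], of "\<lambda>q. poly.coeff q i"]
      by (simp add: s_def algebra_simps)
    then have "norm (poly.coeff c i) \<le> norm (poly.coeff (pCons (poly c z) s) i) + norm z * max K 0"
      using norm_triangle_ineq4[of "poly.coeff (pCons (poly c z) s) i" "z * poly.coeff s i"]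
        mult_left_mono[OF s_bounded[of i], of "norm z"]
      by (simp add: norm_mult)
    moreover have "norm (poly.coeff (pCons (poly c z) s) i) \<le> M + max K 0"
    proof (cases i)
      case (Suc j)
      then show ?thesis using M_nonneg s_bounded[of j] by simp
    qed (use bounded_z max.cobounded2[of K 0] in simp)
    ultimately show "norm (poly.coeff c i) \<le> M + (1 + norm z) * max K 0"
      by (simp add: algebra_simps)
  qed
qed

lemma finite_int_polys_bounded_coeffs:
  "finite {c :: int poly. degree c < n \<and> (\<forall>i. \<bar>poly.coeff c i\<bar> \<le> N)}"
proof -
  have "{c :: int poly. degree c < n \<and> (\<forall>i. \<bar>poly.coeff c i\<bar> \<le> N)} \<subseteq>
      Poly ` {xs. set xs \<subseteq> {-N..N} \<and> length xs \<le> n}"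
  proof safe
    fix c :: "int poly"
    assume "degree c < n" and bounded: "\<forall>i. \<bar>poly.coeff c i\<bar> \<le> N"
    have "set (coeffs c) \<subseteq> {-N..N}"
    proof
      fix x
      assume "x \<in> set (coeffs c)"
      then obtain i where "x = poly.coeff c i"
        by (auto simp: coeffs_def split: if_splits)
      then show "x \<in> {-N..N}"
        using bounded[rule_format, of i] by (simp add: abs_le_iff)
    qed
    moreover have "length (coeffs c) \<le> n"
      using \<open>degree c < n\<close> by (cases "c = 0") (simp_all add: length_coeffs_degree)
    ultimately show "c \<in> Poly ` {xs. set xs \<subseteq> {-N..N} \<and> length xs \<le> n}"
      by (metis (mono_tags, lifting) Poly_coeffs image_eqI mem_Collect_eq)
  qed
  then show ?thesis
    by (rule finite_subset) (intro finite_imageI finite_lists_length_le, simp)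
qed

lemma norm_bounded_if_contracting:
  fixes u :: "nat \<Rightarrow> 'a::real_normed_div_algebra"
  assumes "norm z < 1" and "\<And>n. norm (u (Suc n) - z * u n) \<le> M"
  shows "norm (u n) \<le> norm (u 0) + M / (1 - norm z)"
proof (induction n)
  case 0
  have "0 \<le> M" using assms(2)[of 0] norm_ge_zero order_trans by blast
  then show ?case using assms(1) by simp
next
  case (Suc n)
  have "norm (u (Suc n)) \<le> norm (z * u n) + M"
    using norm_triangle_sub[of "u (Suc n)" "z * u n"] assms(2)[of n] by simp
  also have "\<dots> \<le> norm z * (norm (u 0) + M / (1 - norm z)) + M"
    using Suc.IH by (simp add: norm_mult mult_left_mono)
  also have "\<dots> \<le> norm (u 0) + M / (1 - norm z)"
  proof -
    have "(1 - norm z) * (norm (u 0) + M / (1 - norm z)) = (1 - norm z) * norm (u 0) + M"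
      using assms(1) by (simp add: field_simps)
    moreover have "0 \<le> (1 - norm z) * norm (u 0)"
      using assms(1) by simp
    ultimately show ?thesis by (simp add: left_diff_distrib)
  qed
  finally show ?case .
qed

lemma norm_strict_mono_if_expanding:
  fixes u :: "nat \<Rightarrow> 'a::real_normed_div_algebra"
  assumes z: "norm z > 1" and step: "\<And>n. norm (u (Suc n) - z * u n) \<le> M"
    and start: "norm (u 0) > M / (norm z - 1)"
  shows "strict_mono (\<lambda>n. norm (u n))"
proof -
  define C where "C = M / (norm z - 1)"
  have grow: "norm z * (norm (u n) - C) \<le> norm (u (Suc n)) - C" for n
  proof -
    have "norm (z * u n) \<le> norm (u (Suc n)) + M"
      using norm_triangle_sub[of "z * u n" "u (Suc n)"] step[of n] by (simp add: norm_minus_commute)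
    moreover have "norm z * C = C + M" using z by (simp add: C_def field_simps)
    ultimately show ?thesis by (simp add: norm_mult algebra_simps)
  qed
  have above: "norm (u n) > C" for n
  proof (induction n)
    case 0
    then show ?case using start by (simp add: C_def)
  next
    case (Suc n)
    then have "0 < norm z * (norm (u n) - C)" using z by (intro mult_pos_pos) linarith+
    then show ?case using grow[of n] by simp
  qed
  have "norm (u n) < norm (u (Suc n))" for n
  proof -
    have "0 < (norm z - 1) * (norm (u n) - C)"
      using above[of n] z by simp
    then show ?thesis
      using grow[of n] by (simp add: algebra_simps)
  qed
  then show ?thesis
    by (simp add: strict_mono_Suc_iff)
qed

lemma finite_range_imp_repeats:
  fixes f :: "nat \<Rightarrow> 'a"
  assumes "finite (range f)"
  shows "\<exists>m k. k > 0 \<and> f (m + k) = f m"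
proof -
  obtain a b where "a < b" and "f a = f b"
    using range_inj_infinite[of f] assms unfolding inj_def by (metis linorder_neqE_nat)
  then show ?thesis by (intro exI[of _ a] exI[of _ "b - a"]) simp
qed

interpretation of_rat_poly_hom: map_poly_comm_ring_hom "of_rat :: rat \<Rightarrow> 'a::field_char_0" ..

lemma map_poly_of_rat_of_int_poly [simp]:
  "map_poly (of_rat :: rat \<Rightarrow> 'a::field_char_0) (of_int_poly c) = of_int_poly c"
  by (simp add: map_poly_map_poly o_def)

lemma of_real_of_rat_eq: "of_real (of_rat r) = (of_rat r :: 'a::real_field)"
  by (cases r) (simp add: of_rat_rat)

lemma poly_map_poly_of_rat_of_real:
  "poly (map_poly of_rat q) (of_real x :: 'a::real_field) = of_real (poly (map_poly of_rat q) x)"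
proof -
  have "map_poly (of_rat :: rat \<Rightarrow> 'a) q = map_poly of_real (map_poly of_rat q)"
    by (simp add: map_poly_map_poly o_def of_real_of_rat_eq)
  then show ?thesis
    by (simp add: of_real_hom.poly_map_poly)
qed

lemma irreducible_rat_poly_if_monic:
  fixes p :: "int poly"
  assumes "irreducible p" and "lead_coeff p = 1"
  shows "irreducible (of_int_poly p :: rat poly)"
proof -
  have "content p = 1"
    using content_dvd_coeff[of p "degree p"] content_ge_0_int[of p] assms(2) by (simp add: zdvd1_eq)
  then have "irreducible\<^sub>d p"
    using irreducible_primitive_connect[of p] assms(1) by simp
  then show ?thesis
    using irreducible\<^sub>d_int_rat irreducible_connect_field by blast
qed

lemma irreducible_dvd_if_common_root:
  fixes P q :: "rat poly" and w :: "'a::field_char_0"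
  assumes "irreducible P"
    and "poly (map_poly of_rat P) w = 0" and "poly (map_poly of_rat q) w = 0"
  shows "P dvd q"
proof (rule ccontr)
  assume "\<not> P dvd q"
  with assms(1) have "gcd P q = 1"
    using irreducible_imp_prime_elem prime_elem_imp_coprime by (metis coprime_iff_gcd_eq_1)
  then obtain a b where "a * P + b * q = 1"
    using bezout_coefficients_fst_snd by metis
  then have "poly (map_poly of_rat (a * P + b * q)) w = 1"
    by simp
  with assms(2,3) show False
    by (simp add: hom_distribs)
qed

lemma Qfield_iff: "x \<in> Qfield b \<longleftrightarrow> (\<exists>q. x = poly (map_poly of_rat q) b)"
  unfolding Qfield_def by auto

locale real_algebraic_integer =
  fixes p :: "int poly" and \<beta> :: real
  assumes irreducible: "irreducible p" and monic: "lead_coeff p = 1"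
    and root: "poly (of_int_poly p) \<beta> = 0"
begin

definition conjugates :: "complex set" where
  "conjugates = {z. poly (of_int_poly p) z = 0}"

text \<open>For z \<in> conjugates this is the field embedding of Q(\<beta>) sending \<beta> to z;
  it does not depend on the chosen representative q because p is the minimal polynomial
  of \<beta> (see embedding_poly).\<close>
definition embedding :: "complex \<Rightarrow> real \<Rightarrow> complex" where
  "embedding z x = poly (map_poly of_rat (SOME q. x = poly (map_poly of_rat q) \<beta>)) z"

lemma degree_pos: "degree p > 0"
proof (rule ccontr)
  assume "\<not> degree p > 0"
  then have "p = [:1:]"
    using monic by (metis degree_0_id gr0I leading_coeff_0_iff)
  then show False
    using root by simp
qed

lemma min_poly_dvd:
  fixes w :: "'a::field_char_0"
  assumes "poly (of_int_poly p) w = 0" and "poly (map_poly of_rat q) w = 0"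
  shows "of_int_poly p dvd q"
  using irreducible_dvd_if_common_root[OF irreducible_rat_poly_if_monic[OF irreducible monic]] assms
  by simp

lemma beta_conjugate: "complex_of_real \<beta> \<in> conjugates"
  using poly_map_poly_of_rat_of_real[of "of_int_poly p" \<beta>] root by (simp add: conjugates_def)

lemma finite_conjugates: "finite conjugates"
  using degree_pos unfolding conjugates_def by (intro poly_roots_finite) auto

lemma card_conjugates: "card conjugates = degree p"
proof -
  let ?P = "of_int_poly p :: complex poly"
  have "rsquarefree ?P"
    unfolding rsquarefree_roots
  proof (intro allI notI)
    fix a
    assume "poly ?P a = 0 \<and> poly (pderiv ?P) a = 0"
    moreover have "pderiv ?P = of_int_poly (pderiv p)"
      by (simp add: of_int_hom.map_poly_pderiv)
    ultimately have "of_int_poly p dvd (of_int_poly (pderiv p) :: rat poly)"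
      by (intro min_poly_dvd[of a]) (simp_all only: map_poly_of_rat_of_int_poly)
    then have "of_int_poly p dvd pderiv (of_int_poly p :: rat poly)"
      by (simp add: of_int_hom.map_poly_pderiv)
    moreover have "pderiv (of_int_poly p :: rat poly) \<noteq> 0"
      using degree_pos by (simp add: pderiv_eq_0_iff)
    ultimately show False
      using dvd_imp_degree_le degree_pos by (fastforce simp: degree_pderiv)
  qed
  moreover have "p \<noteq> 0"
    using degree_pos by auto
  ultimately show ?thesis
    using rsquarefree_card_degree[of ?P] by (simp add: conjugates_def)
qed

lemma embedding_poly:
  assumes "z \<in> conjugates"
  shows "embedding z (poly (map_poly of_rat q) \<beta>) = poly (map_poly of_rat q) z"
proof -
  define q' where "q' = (SOME q'. poly (map_poly of_rat q) \<beta> = poly (map_poly of_rat q') \<beta>)"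
  have "poly (map_poly of_rat q) \<beta> = poly (map_poly of_rat q') \<beta>"
    unfolding q'_def by (rule someI_ex) blast
  then have "of_int_poly p dvd q' - q"
    using root by (intro min_poly_dvd[of \<beta>]) (simp_all add: hom_distribs)
  then obtain k where k: "q' - q = of_int_poly p * k"
    by (elim dvdE)
  have "poly (map_poly of_rat (q' - q)) z = 0"
    unfolding k using assms by (simp add: conjugates_def hom_distribs)
  then show ?thesis
    by (simp add: embedding_def q'_def[symmetric] hom_distribs)
qed

lemma embedding_beta:
  assumes "x \<in> Qfield \<beta>"
  shows "embedding (complex_of_real \<beta>) x = complex_of_real x"
  using assms embedding_poly[OF beta_conjugate] poly_map_poly_of_rat_of_real
  by (auto simp: Qfield_iff)

lemma Qfield_affine:
  assumes "x \<in> Qfield \<beta>" and "y \<in> Qfield \<beta>"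
  shows "\<beta> * x - y \<in> Qfield \<beta>"
    and "z \<in> conjugates \<Longrightarrow> embedding z (\<beta> * x - y) = z * embedding z x - embedding z y"
proof -
  obtain qx qy where x: "x = poly (map_poly of_rat qx) \<beta>" and y: "y = poly (map_poly of_rat qy) \<beta>"
    using assms by (auto simp: Qfield_iff)
  have xy: "\<beta> * x - y = poly (map_poly of_rat ([:0, 1:] * qx - qy)) \<beta>"
    by (simp add: x y hom_distribs)
  then show "\<beta> * x - y \<in> Qfield \<beta>"
    by (auto simp: Qfield_iff)
  show "embedding z (\<beta> * x - y) = z * embedding z x - embedding z y" if "z \<in> conjugates"
  proof -
    have "embedding z (\<beta> * x - y) = poly (map_poly of_rat ([:0, 1:] * qx - qy)) z"
      unfolding xy by (rule embedding_poly[OF that])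
    also have "\<dots> = z * embedding z x - embedding z y"
      unfolding x y embedding_poly[OF that] by (simp add: hom_distribs)
    finally show ?thesis .
  qed
qed

definition has_denom :: "int \<Rightarrow> real \<Rightarrow> bool" where
  "has_denom D w \<longleftrightarrow> (\<exists>c :: int poly. of_int D * w = poly (of_int_poly c) \<beta>)"

lemma has_denom_affine:
  assumes "has_denom D x" and "has_denom D y"
  shows "has_denom D (\<beta> * x - y)"
proof -
  obtain cx cy where "of_int D * x = poly (of_int_poly cx) \<beta>"
    and "of_int D * y = poly (of_int_poly cy) \<beta>"
    using assms by (auto simp: has_denom_def)
  then have "of_int D * (\<beta> * x - y) = poly (of_int_poly ([:0, 1:] * cx - cy)) \<beta>"
    by (simp add: hom_distribs algebra_simps)
  then show ?thesis
    by (auto simp: has_denom_def)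
qed

lemma has_denom_mult:
  assumes "has_denom d x"
  shows "has_denom (e * d) x"
proof -
  obtain c where "of_int d * x = poly (of_int_poly c) \<beta>"
    using assms by (auto simp: has_denom_def)
  then have "of_int (e * d) * x = poly (of_int_poly (Polynomial.smult e c)) \<beta>"
    by (simp add: hom_distribs)
  then show ?thesis
    by (auto simp: has_denom_def)
qed

lemma Qfield_has_denom:
  assumes "x \<in> Qfield \<beta>"
  obtains d where "d > 0" and "has_denom d x"
proof -
  obtain q where x: "x = poly (map_poly of_rat q) \<beta>"
    using assms by (auto simp: Qfield_iff)
  obtain d c where "rat_to_int_poly q = (d, c)"
    by (cases "rat_to_int_poly q")
  from rat_to_int_poly[OF this]
  have q: "q = Polynomial.smult (inverse (of_int d)) (of_int_poly c)" and "d > 0"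
    by auto
  moreover have "of_int d * x = poly (of_int_poly c) \<beta>"
    using \<open>d > 0\<close> by (simp add: x q hom_distribs of_rat_inverse)
  ultimately show ?thesis
    using that by (auto simp: has_denom_def)
qed

lemma Qfield_common_denom:
  assumes "finite A" and "A \<subseteq> Qfield \<beta>"
  obtains D where "D > 0" and "\<forall>w\<in>A. has_denom D w"
  using assms
proof (induction A arbitrary: thesis rule: finite_induct)
  case empty
  show ?case by (rule empty.prems(1)[of 1]) simp_all
next
  case (insert x A)
  obtain D where "D > 0" and D: "\<forall>w\<in>A. has_denom D w"
    using insert by blast
  moreover obtain d where "d > 0" and "has_denom d x"
    using insert.prems Qfield_has_denom by blast
  ultimately have "d * D > 0" and "\<forall>w\<in>insert x A. has_denom (d * D) w"
    using has_denom_mult[of d x D] has_denom_mult[of D _ d] by (simp_all add: mult.commute)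
  then show ?case
    using insert.prems(1) by blast
qed

lemma has_denom_reduced:
  assumes "has_denom D w"
  obtains c where "degree c < degree p" and "of_int D * w = poly (of_int_poly c) \<beta>"
proof -
  obtain c where c: "of_int D * w = poly (of_int_poly c) \<beta>"
    using assms by (auto simp: has_denom_def)
  have "p \<noteq> 0"
    using degree_pos by auto
  obtain q r where "pseudo_divmod c p = (q, r)"
    by (cases "pseudo_divmod c p")
  with pseudo_divmod[OF \<open>p \<noteq> 0\<close> this] monic degree_pos
  have "c = p * q + r" and "degree r < degree p"
    by auto
  moreover have "poly (of_int_poly c) \<beta> = poly (of_int_poly r) \<beta>"
    using root by (simp add: \<open>c = p * q + r\<close> hom_distribs)
  ultimately show ?thesis
    using that c by simp
qed

lemma embedding_denom:
  assumes "D \<noteq> 0" and "of_int D * w = poly (of_int_poly c) \<beta>" and "z \<in> conjugates"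
  shows "of_int D * embedding z w = poly (of_int_poly c) z"
proof -
  define q where "q = Polynomial.smult (inverse (of_int D)) (of_int_poly c :: rat poly)"
  have "w = poly (map_poly of_rat q) \<beta>"
    using assms(1,2) by (simp add: q_def hom_distribs of_rat_inverse field_simps)
  then have "embedding z w = poly (map_poly of_rat q) z"
    by (simp only: embedding_poly[OF assms(3)])
  then show ?thesis
    using assms(1) by (simp add: q_def hom_distribs of_rat_inverse)
qed

lemma finite_if_embeddings_bounded:
  assumes "D > 0" and denom: "\<forall>w\<in>W. has_denom D w"
    and bounded: "\<And>z. z \<in> conjugates \<Longrightarrow> \<exists>K. \<forall>w\<in>W. norm (embedding z w) \<le> K"
  shows "finite W"
proof -
  obtain zs where zs: "set zs = conjugates" and "distinct zs"
    using finite_distinct_list[OF finite_conjugates] by blast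
  have length_zs: "length zs = degree p"
    using distinct_card[OF \<open>distinct zs\<close>] card_conjugates zs by simp
  obtain K where K: "\<forall>z\<in>conjugates. \<forall>w\<in>W. norm (embedding z w) \<le> K"
  proof -
    obtain Kz where "\<forall>z\<in>conjugates. \<forall>w\<in>W. norm (embedding z w) \<le> Kz z"
      using bounded by metis
    moreover have "Kz z \<le> (\<Sum>z\<in>conjugates. \<bar>Kz z\<bar>)" if "z \<in> conjugates" for z
      using that finite_conjugates member_le_sum[of z conjugates "\<lambda>z. \<bar>Kz z\<bar>"] by fastforce
    ultimately show ?thesis
      using that by (meson order_trans)
  qed
  obtain L where L: "\<And>c :: complex poly. degree c < length zs \<Longrightarrow>
      \<forall>z\<in>set zs. norm (poly c z) \<le> of_int D * K \<Longrightarrow> \<forall>i. norm (poly.coeff c i) \<le> L"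
    using bounded_coeffs_if_bounded_at[OF \<open>distinct zs\<close>] by metis
  define S where "S = {c :: int poly. degree c < degree p \<and> (\<forall>i. \<bar>poly.coeff c i\<bar> \<le> \<lceil>L\<rceil>)}"
  have "W \<subseteq> (\<lambda>c. poly (of_int_poly c) \<beta> / of_int D) ` S"
  proof
    fix w
    assume "w \<in> W"
    then obtain c where deg: "degree c < degree p" and c: "of_int D * w = poly (of_int_poly c) \<beta>"
      using denom has_denom_reduced by metis
    have "norm (poly (of_int_poly c) z) \<le> of_int D * K" if "z \<in> conjugates" for z
    proof -
      have "norm (poly (of_int_poly c) z) = of_int D * norm (embedding z w)"
        using \<open>D > 0\<close> by (simp flip: embedding_denom[OF _ c that] add: norm_mult)
      also have "\<dots> \<le> of_int D * K"
        using K \<open>w \<in> W\<close> that \<open>D > 0\<close> by (simp add: mult_left_mono)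
      finally show ?thesis .
    qed
    then have coeff_bound: "norm (poly.coeff (of_int_poly c :: complex poly) i) \<le> L" for i
      using L[of "of_int_poly c"] deg length_zs zs by simp
    have "\<bar>poly.coeff c i\<bar> \<le> \<lceil>L\<rceil>" for i
      using coeff_bound[of i] unfolding le_ceiling_iff by simp
    then have "c \<in> S"
      using deg by (simp add: S_def)
    moreover have "w = poly (of_int_poly c) \<beta> / of_int D"
      using c \<open>D > 0\<close> by (simp add: field_simps)
    ultimately show "w \<in> (\<lambda>c. poly (of_int_poly c) \<beta> / of_int D) ` S"
      by blast
  qed
  moreover have "finite S"
    unfolding S_def by (rule finite_int_polys_bounded_coeffs)
  ultimately show ?thesis
    using finite_subset by blast
qed

lemma exists_large_embedding:
  assumes "z \<in> conjugates" and "z \<noteq> complex_of_real \<beta>" and "0 < B"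
  obtains x where "x \<in> Qfield \<beta> \<inter> {0..<B}" and "C < norm (embedding z x)"
proof -
  obtain b :: nat where b: "C + B < of_nat b * norm (z - complex_of_real \<beta>)"
    using ex_less_of_nat_mult[of "norm (z - complex_of_real \<beta>)" "C + B"] assms(2) by auto
  obtain r where "of_nat b * \<beta> - B < of_rat r" and "of_rat r < of_nat b * \<beta>"
    using Rats_dense_in_real[of "of_nat b * \<beta> - B" "of_nat b * \<beta>"] assms(3)
    by (auto elim: Rats_cases)
  define x where "x = of_nat b * \<beta> - of_rat r"
  have x_poly: "x = poly (map_poly of_rat [:-r, of_nat b:]) \<beta>"
    by (simp add: x_def hom_distribs of_rat_minus of_real_of_rat_eq algebra_simps)
  then have x_in: "x \<in> Qfield \<beta> \<inter> {0..<B}"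
    using \<open>of_nat b * \<beta> - B < of_rat r\<close> \<open>of_rat r < of_nat b * \<beta>\<close>
    by (auto simp: Qfield_iff x_def)
  have "embedding z x = poly (map_poly of_rat [:-r, of_nat b:]) z"
    unfolding x_poly by (rule embedding_poly[OF assms(1)])
  then have "embedding z x - complex_of_real x = of_nat b * (z - complex_of_real \<beta>)"
    by (simp add: x_def hom_distribs of_rat_minus of_real_of_rat_eq algebra_simps)
  then have "of_nat b * norm (z - complex_of_real \<beta>) \<le> norm (embedding z x) + \<bar>x\<bar>"
    using norm_triangle_ineq4[of "embedding z x" "complex_of_real x"] by (simp add: norm_mult)
  moreover have "\<bar>x\<bar> < B"
    using x_in by auto
  ultimately show ?thesis
    using that[OF x_in] b by linarith
qed

end

lemma gen_beta_transf_pos: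
  assumes "gen_beta_transf \<beta> B l xs ys F"
  shows "0 < B"
proof -
  have "1 \<in> {1..l}" and "xs 0 = 0" and "xs 0 < xs 1"
    and "\<forall>t. xs 0 \<le> t \<and> t < xs 1 \<longrightarrow> 0 \<le> \<beta> * t - ys 1 \<and> \<beta> * t - ys 1 < B"
    using assms unfolding gen_beta_transf_def by auto
  then show ?thesis
    by fastforce
qed

lemma gen_beta_transf_step:
  assumes transf: "gen_beta_transf \<beta> B l xs ys F" and t: "t \<in> {0..<B}"
  obtains j where "j \<in> {1..l}" and "F t = \<beta> * t - ys j" and "F t \<in> {0..<B}"
proof -
  have "xs 0 = 0" and "xs l = B"
    and pieces: "\<And>j t. j \<in> {1..l} \<Longrightarrow> xs (j - 1) \<le> t \<Longrightarrow> t < xs j \<Longrightarrow>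
        0 \<le> \<beta> * t - ys j \<and> \<beta> * t - ys j < B \<and> F t = \<beta> * t - ys j"
    using transf unfolding gen_beta_transf_def by blast+
  define j where "j = (LEAST j. t < xs j)"
  have "t < xs l"
    using \<open>xs l = B\<close> t by simp
  then have "t < xs j" and "j \<le> l"
    unfolding j_def by (auto intro: LeastI Least_le)
  moreover have "j \<noteq> 0"
  proof
    assume "j = 0"
    with \<open>t < xs j\<close> \<open>xs 0 = 0\<close> t show False by simp
  qed
  moreover have "xs (j - 1) \<le> t"
    using not_less_Least[of "j - 1" "\<lambda>j. t < xs j"] \<open>j \<noteq> 0\<close> unfolding j_def by simp
  ultimately have "j \<in> {1..l}"
    and "0 \<le> \<beta> * t - ys j \<and> \<beta> * t - ys j < B \<and> F t = \<beta> * t - ys j"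
    using pieces[of j t] by auto
  then show ?thesis
    by (intro that[of j]) auto
qed

locale gen_beta_orbit = real_algebraic_integer +
  fixes B :: real and l :: nat and xs ys :: "nat \<Rightarrow> real" and F :: "real \<Rightarrow> real"
  assumes transf: "gen_beta_transf \<beta> B l xs ys F"
    and shifts: "\<forall>j\<in>{1..l}. ys j \<in> Qfield \<beta>"
begin

lemma orbit_mem:
  assumes "x \<in> Qfield \<beta> \<inter> {0..<B}"
  shows "(F ^^ n) x \<in> Qfield \<beta> \<inter> {0..<B}"
proof (induction n)
  case 0
  then show ?case using assms by simp
next
  case (Suc n)
  then obtain j where "j \<in> {1..l}" and "F ((F ^^ n) x) = \<beta> * (F ^^ n) x - ys j"
    and "F ((F ^^ n) x) \<in> {0..<B}"
    using gen_beta_transf_step[OF transf] by blast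
  then show ?case
    using Suc shifts Qfield_affine(1) by auto
qed

lemma embedding_step:
  assumes "t \<in> Qfield \<beta> \<inter> {0..<B}" and "z \<in> conjugates"
  shows "norm (embedding z (F t) - z * embedding z t) \<le> (\<Sum>j\<in>{1..l}. norm (embedding z (ys j)))"
proof -
  obtain j where j: "j \<in> {1..l}" and "F t = \<beta> * t - ys j"
    using assms(1) gen_beta_transf_step[OF transf] by blast
  then have "embedding z (F t) - z * embedding z t = - embedding z (ys j)"
    using assms shifts Qfield_affine(2) by auto
  moreover have "norm (embedding z (ys j)) \<le> (\<Sum>j\<in>{1..l}. norm (embedding z (ys j)))"
    using j by (intro member_le_sum) auto
  ultimately show ?thesis
    by simp
qed

lemma orbit_has_denom:
  assumes "x \<in> Qfield \<beta> \<inter> {0..<B}"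
  obtains D where "D > 0" and "\<And>n. has_denom D ((F ^^ n) x)"
proof -
  obtain D where "D > 0" and D: "\<forall>w\<in>insert x (ys ` {1..l}). has_denom D w"
    using Qfield_common_denom[of "insert x (ys ` {1..l})"] assms shifts by auto
  have "has_denom D ((F ^^ n) x)" for n
  proof (induction n)
    case 0
    then show ?case using D by simp
  next
    case (Suc n)
    obtain j where "j \<in> {1..l}" and "F ((F ^^ n) x) = \<beta> * (F ^^ n) x - ys j"
      using orbit_mem[OF assms] gen_beta_transf_step[OF transf] by blast
    then show ?case
      using Suc D has_denom_affine by auto
  qed
  then show ?thesis
    using that \<open>D > 0\<close> by blast
qed

lemma orbit_finite_if_conjugates_small:
  assumes small: "\<forall>z\<in>conjugates - {complex_of_real \<beta>}. norm z < 1"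
    and x: "x \<in> Qfield \<beta> \<inter> {0..<B}"
  shows "finite (range (\<lambda>n. (F ^^ n) x))"
proof -
  obtain D where "D > 0" and D: "\<And>n. has_denom D ((F ^^ n) x)"
    using orbit_has_denom[OF x] by blast
  have "\<exists>K. \<forall>n. norm (embedding z ((F ^^ n) x)) \<le> K" if z: "z \<in> conjugates" for z
  proof (cases "z = complex_of_real \<beta>")
    case True
    have "norm (embedding z ((F ^^ n) x)) \<le> B" for n
      using orbit_mem[OF x, of n] by (auto simp: True embedding_beta)
    then show ?thesis by blast
  next
    case False
    then have "norm z < 1"
      using small z by blast
    moreover have "norm (embedding z ((F ^^ Suc n) x) - z * embedding z ((F ^^ n) x))
        \<le> (\<Sum>j\<in>{1..l}. norm (embedding z (ys j)))" for n
      using embedding_step[OF orbit_mem[OF x] z] by simp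
    ultimately show ?thesis
      using norm_bounded_if_contracting[of z "\<lambda>n. embedding z ((F ^^ n) x)"] by blast
  qed
  then show ?thesis
    using \<open>D > 0\<close> D by (intro finite_if_embeddings_bounded[of D]) auto
qed

lemma orbit_infinite_if_conjugate_large:
  assumes z: "z \<in> conjugates" "z \<noteq> complex_of_real \<beta>" and large: "norm z > 1"
  obtains x where "x \<in> Qfield \<beta> \<inter> {0..<B}" and "infinite (range (\<lambda>n. (F ^^ n) x))"
proof -
  define M where "M = (\<Sum>j\<in>{1..l}. norm (embedding z (ys j)))"
  obtain x where x: "x \<in> Qfield \<beta> \<inter> {0..<B}" and "M / (norm z - 1) < norm (embedding z x)"
    using exists_large_embedding[OF z gen_beta_transf_pos[OF transf]] by blast
  then have "strict_mono (\<lambda>n. norm (embedding z ((F ^^ n) x)))"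
    using large embedding_step[OF orbit_mem[OF x] z(1)]
    by (intro norm_strict_mono_if_expanding[where M = M]) (simp_all add: M_def)
  then have "inj ((\<lambda>w. norm (embedding z w)) \<circ> (\<lambda>n. (F ^^ n) x))"
    by (simp add: o_def strict_mono_imp_inj_on)
  then have "inj (\<lambda>n. (F ^^ n) x)"
    by (rule inj_on_imageI2)
  then show ?thesis
    using that x range_inj_infinite by blast
qed

end

theorem theorem3p1:
  fixes p :: "int poly" and \<beta> B :: real and l :: nat
    and xs ys :: "nat \<Rightarrow> real" and F :: "real \<Rightarrow> real"
  assumes "irreducible p" and "lead_coeff p = 1" and "degree p > 1"
    and "\<beta> > 1" and "poly (map_poly real_of_int p) \<beta> = 0"
    and "gen_beta_transf \<beta> B l xs ys F"
    and "\<forall>j\<le>l. xs j \<in> Qfield \<beta>" and "\<forall>j\<in>{1..l}. ys j \<in> Qfield \<beta>"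
  shows "((\<forall>z. poly (map_poly complex_of_int p) z = 0 \<and> z \<noteq> complex_of_real \<beta> \<longrightarrow> cmod z < 1) \<longrightarrow>
            (\<forall>x \<in> Qfield \<beta> \<inter> {0..<B}. finite {(F ^^ n) x | n. True} \<and>
               (\<exists>m k. k > 0 \<and> (F ^^ (m + k)) x = (F ^^ m) x)))
       \<and> ((\<exists>z. poly (map_poly complex_of_int p) z = 0 \<and> z \<noteq> complex_of_real \<beta> \<and> cmod z > 1) \<longrightarrow>
            (\<exists>x \<in> Qfield \<beta> \<inter> {0..<B}. infinite {(F ^^ n) x | n. True}))"
proof -
  interpret gen_beta_orbit p \<beta> B l xs ys F
    using assms(1,2,5,6,8) by unfold_locales auto
  have orbit_eq: "{(F ^^ n) x | n. True} = range (\<lambda>n. (F ^^ n) x)" for x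
    by auto
  show ?thesis
  proof (intro conjI impI)
    assume "\<forall>z. poly (map_poly complex_of_int p) z = 0 \<and> z \<noteq> complex_of_real \<beta> \<longrightarrow> cmod z < 1"
    then have small: "\<forall>z\<in>conjugates - {complex_of_real \<beta>}. norm z < 1"
      by (auto simp: conjugates_def)
    show "\<forall>x \<in> Qfield \<beta> \<inter> {0..<B}. finite {(F ^^ n) x | n. True} \<and>
        (\<exists>m k. k > 0 \<and> (F ^^ (m + k)) x = (F ^^ m) x)"
    proof
      fix x
      assume "x \<in> Qfield \<beta> \<inter> {0..<B}"
      with small have "finite (range (\<lambda>n. (F ^^ n) x))"
        by (rule orbit_finite_if_conjugates_small)
      then show "finite {(F ^^ n) x | n. True} \<and> (\<exists>m k. k > 0 \<and> (F ^^ (m + k)) x = (F ^^ m) x)"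
        using finite_range_imp_repeats by (subst orbit_eq) blast
    qed
  next
    assume "\<exists>z. poly (map_poly complex_of_int p) z = 0 \<and> z \<noteq> complex_of_real \<beta> \<and> cmod z > 1"
    then obtain z where "z \<in> conjugates" and "z \<noteq> complex_of_real \<beta>" and "cmod z > 1"
      by (auto simp: conjugates_def)
    then show "\<exists>x \<in> Qfield \<beta> \<inter> {0..<B}. infinite {(F ^^ n) x | n. True}"
      using orbit_infinite_if_conjugate_large by (subst orbit_eq) metis
  qed
qed

end
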